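(* Fix $K$ and $K_T$ with $0<K_T<K$. Among all partitions $\mathcal{C}$ of $[N]$ into $K$ equally sized clusters, the set of maximizers of $\operatorname{Tr}\big(\operatorname{Var}_{\mathbf{Z}\sim\mathcal{D}(\mathcal{C})}(\mathbf{d})\big)$ equals the set of minimizers of $$\sum_{i\in[N]}\sum_{j\notin\mathcal{C}(i)}\sum_{s\in[M]}\frac{w_{is}}{\sum_{k}w_{ks}}\,\frac{w_{js}}{\sum_{k}w_{ks}},$$ where $\mathbf{d}=(d_1,\dots,d_M)$ and $\operatorname{Var}(\mathbf{d})$ is its covariance matrix.
   Context: Setting: $N$ experimental units $[N]$, $M$ interference units $[M]$, weights $w_{is}\ge0$ with $\sum_i w_{is}>0$ for all $s$. For $\mathbf{Z}\in\{-1,1\}^N$: dose $d_s=\frac{\sum_i w_{is}Z_i}{\sum_i w_{is}}$. Balanced $K$-cluster randomized design $\mathcal{D}(\mathcal{C})$: $K\ge2$ divides $N$, $\mathcal{C}$ partitions $[N]$ into $K$ clusters of size $N/K$, $\mathcal{C}(i)$ is the cluster of $i$; $K_T$ clusters chosen uniformly at random are treated ($Z_i=1$), the rest are control ($Z_i=-1$). *)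

theory Defs
  imports "HOL-Probability.Probability" "HOL-Library.Disjoint_Sets"
begin

text \<open>Experimental units are 0..<N, interference units 0..<M, weights w i s.\<close>

definition colsum :: "nat \<Rightarrow> (nat \<Rightarrow> nat \<Rightarrow> real) \<Rightarrow> nat \<Rightarrow> real" where
  "colsum N w s = (\<Sum>k<N. w k s)"

definition dose :: "nat \<Rightarrow> (nat \<Rightarrow> nat \<Rightarrow> real) \<Rightarrow> (nat \<Rightarrow> real) \<Rightarrow> nat \<Rightarrow> real" where
  "dose N w Z s = (\<Sum>i<N. w i s * Z i) / colsum N w s"

definition balanced_partitions :: "nat \<Rightarrow> nat \<Rightarrow> nat set set set" where
  "balanced_partitions N K =
     {C. partition_on {..<N} C \<and> card C = K \<and> (\<forall>B\<in>C. card B = N div K)}"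

definition cluster_of :: "nat set set \<Rightarrow> nat \<Rightarrow> nat set" where
  "cluster_of C i = (THE B. B \<in> C \<and> i \<in> B)"

definition cluster_design :: "nat set set \<Rightarrow> nat \<Rightarrow> (nat \<Rightarrow> real) pmf" where
  "cluster_design C KT =
     map_pmf (\<lambda>T i. if cluster_of C i \<in> T then 1 else -1)
             (pmf_of_set {T. T \<subseteq> C \<and> card T = KT})"

definition trace_var_dose ::
  "nat \<Rightarrow> nat \<Rightarrow> (nat \<Rightarrow> nat \<Rightarrow> real) \<Rightarrow> nat \<Rightarrow> nat set set \<Rightarrow> real" where
  "trace_var_dose N M w KT C =
     (\<Sum>s<M. measure_pmf.variance (cluster_design C KT) (\<lambda>Z. dose N w Z s))"

definition cross_cluster_weight ::
  "nat \<Rightarrow> nat \<Rightarrow> (nat \<Rightarrow> nat \<Rightarrow> real) \<Rightarrow> nat set set \<Rightarrow> real" where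
  "cross_cluster_weight N M w C =
     (\<Sum>i<N. \<Sum>j\<in>{..<N} - cluster_of C i. \<Sum>s<M.
        (w i s / colsum N w s) * (w j s / colsum N w s))"

end

theory Submission
  imports Defs
begin

text \<open>Put \<open>a i = w i s / (\<Sum>k. w k s)\<close> and let \<open>Y B = \<plusminus>1\<close> be the treatment sign of cluster
  \<open>B\<close>, so that \<open>d s = \<Sum>i. a i * Y (C i)\<close> with \<open>\<Sum>i. a i = 1\<close>. Under the design every \<open>Y B\<close> has
  the same mean \<open>\<mu>\<close>, and any two distinct clusters have the same correlation \<open>\<rho> < 1\<close>; both depend
  only on \<open>K\<close> and \<open>K\<^sub>T\<close>. Hence \<open>Var (d s) = 1 - \<mu>\<^sup>2 - (1 - \<rho>) * \<Sum>i. \<Sum>j \<notin> C i. a i * a j\<close>, and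
  the trace is a strictly decreasing affine function of the cross-cluster weight.\<close>

lemma cluster_of_mem:
  assumes "partition_on A C" "i \<in> A"
  shows "cluster_of C i \<in> C" "i \<in> cluster_of C i"
proof -
  have "\<exists>!B. B \<in> C \<and> i \<in> B"
    using partition_onD1[OF assms(1)] partition_onD2[OF assms(1)] assms(2)
    by (auto dest: disjointD)
  from theI'[OF this] show "cluster_of C i \<in> C" "i \<in> cluster_of C i"
    unfolding cluster_of_def by blast+
qed

lemma cluster_of_eqI:
  assumes "partition_on A C" "B \<in> C" "i \<in> B"
  shows "cluster_of C i = B"
proof -
  have "i \<in> A" using partition_onD1[OF assms(1)] assms(2,3) by blast
  with assms show ?thesis
    using cluster_of_mem partition_onD2[OF assms(1)] by (meson disjointD disjoint_iff)
qed

lemma mem_cluster_of_iff: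
  assumes "partition_on A C" "i \<in> A" "j \<in> A"
  shows "j \<in> cluster_of C i \<longleftrightarrow> cluster_of C j = cluster_of C i"
  using cluster_of_mem[OF assms(1)] cluster_of_eqI[OF assms(1)] assms(2,3) by metis

lemma card_subsets_insert_containing:
  assumes "finite C" "B \<notin> C"
  shows "card {T. T \<subseteq> insert B C \<and> card T = Suc k \<and> B \<in> T} = card C choose k"
proof -
  have "{T. T \<subseteq> insert B C \<and> card T = Suc k \<and> B \<in> T} = insert B ` {T. T \<subseteq> C \<and> card T = k}"
  proof (intro set_eqI iffI)
    fix T assume "T \<in> {T. T \<subseteq> insert B C \<and> card T = Suc k \<and> B \<in> T}"
    hence T: "T \<subseteq> insert B C" "card T = Suc k" "B \<in> T" by auto
    hence "finite T" using assms(1) finite_subset by blast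
    with T have "T - {B} \<subseteq> C" "card (T - {B}) = k" "T = insert B (T - {B})" by auto
    thus "T \<in> insert B ` {T. T \<subseteq> C \<and> card T = k}" by blast
  next
    fix T assume "T \<in> insert B ` {T. T \<subseteq> C \<and> card T = k}"
    then obtain U where U: "U \<subseteq> C" "card U = k" "T = insert B U" by auto
    with assms have "finite U" "B \<notin> U" using finite_subset by blast+
    with U show "T \<in> {T. T \<subseteq> insert B C \<and> card T = Suc k \<and> B \<in> T}" by auto
  qed
  moreover have "inj_on (insert B) {T. T \<subseteq> C \<and> card T = k}"
    using assms(2) by (intro inj_onI) (metis Diff_insert_absorb mem_Collect_eq subsetD)
  ultimately show ?thesis using card_image n_subsets[OF assms(1)] by metis
qed

lemma card_subsets_containing:
  assumes "finite C" "B \<in> C" "0 < k"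
  shows "card {T. T \<subseteq> C \<and> card T = k \<and> B \<in> T} = (card C - 1) choose (k - 1)"
proof -
  have "card {T. T \<subseteq> insert B (C - {B}) \<and> card T = Suc (k - 1) \<and> B \<in> T}
      = card (C - {B}) choose (k - 1)"
    by (rule card_subsets_insert_containing) (use assms in auto)
  moreover have "insert B (C - {B}) = C" "Suc (k - 1) = k" using assms by auto
  ultimately show ?thesis using assms by simp
qed

lemma card_subsets_containing_avoiding:
  assumes "finite C" "B \<in> C" "B' \<in> C" "B \<noteq> B'" "0 < k"
  shows "card {T. T \<subseteq> C \<and> card T = k \<and> B \<in> T \<and> B' \<notin> T} = (card C - 2) choose (k - 1)"
proof -
  have "{T. T \<subseteq> C \<and> card T = k \<and> B \<in> T \<and> B' \<notin> T}
      = {T. T \<subseteq> insert B (C - {B, B'}) \<and> card T = Suc (k - 1) \<and> B \<in> T}"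
    using assms by auto
  moreover have "card \<dots> = card (C - {B, B'}) choose (k - 1)"
    by (rule card_subsets_insert_containing) (use assms in auto)
  moreover have "card (C - {B, B'}) = card C - 2" using assms by (simp add: card_Diff_subset)
  ultimately show ?thesis by simp
qed

definition treatment_sign :: "'a \<Rightarrow> 'a set \<Rightarrow> real" where
  "treatment_sign B T = (if B \<in> T then 1 else -1)"

definition sign_mean :: "nat \<Rightarrow> nat \<Rightarrow> real" where
  "sign_mean K KT = (2 * real ((K - 1) choose (KT - 1)) - real (K choose KT)) / real (K choose KT)"

definition sign_corr :: "nat \<Rightarrow> nat \<Rightarrow> real" where
  "sign_corr K KT = (real (K choose KT) - 4 * real ((K - 2) choose (KT - 1))) / real (K choose KT)"

lemma sign_corr_less_one:
  assumes "0 < KT" "KT < K"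
  shows "sign_corr K KT < 1"
proof -
  have "0 < (K - 2) choose (KT - 1)" "0 < K choose KT" using assms by simp_all
  thus ?thesis unfolding sign_corr_def by (simp add: field_simps)
qed

lemma mean_treatment_sign:
  assumes "finite C" "B \<in> C" "0 < KT"
  shows "(\<Sum>T | T \<subseteq> C \<and> card T = KT. treatment_sign B T) / (card C choose KT)
       = sign_mean (card C) KT"
proof -
  let ?S = "{T. T \<subseteq> C \<and> card T = KT}"
  have "(\<Sum>T\<in>?S. treatment_sign B T) = (\<Sum>T\<in>?S. 2 * of_bool (B \<in> T) - 1)"
    by (rule sum.cong) (auto simp: treatment_sign_def)
  also have "\<dots> = 2 * real (card {T. T \<subseteq> C \<and> card T = KT \<and> B \<in> T}) - real (card ?S)"
    by (simp add: sum_subtractf sum_distrib_left[symmetric] assms(1) Int_def conj_assoc)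
  finally show ?thesis
    unfolding sign_mean_def
    by (simp add: card_subsets_containing assms n_subsets)
qed

lemma mean_treatment_sign_product:
  assumes "finite C" "B \<in> C" "B' \<in> C" "B \<noteq> B'" "0 < KT"
  shows "(\<Sum>T | T \<subseteq> C \<and> card T = KT. treatment_sign B T * treatment_sign B' T)
           / (card C choose KT)
       = sign_corr (card C) KT"
proof -
  let ?S = "{T. T \<subseteq> C \<and> card T = KT}"
  have "(\<Sum>T\<in>?S. treatment_sign B T * treatment_sign B' T)
      = (\<Sum>T\<in>?S. 1 - 2 * of_bool (B \<in> T \<and> B' \<notin> T) - 2 * of_bool (B' \<in> T \<and> B \<notin> T))"
    by (rule sum.cong) (auto simp: treatment_sign_def)
  also have "\<dots> = real (card ?S)
      - 2 * real (card {T. T \<subseteq> C \<and> card T = KT \<and> B \<in> T \<and> B' \<notin> T})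
      - 2 * real (card {T. T \<subseteq> C \<and> card T = KT \<and> B' \<in> T \<and> B \<notin> T})"
    by (simp add: sum_subtractf sum_distrib_left[symmetric] assms(1) Int_def conj_assoc)
  finally show ?thesis
    unfolding sign_corr_def
    using card_subsets_containing_avoiding[OF assms(1,2,3,4,5)]
          card_subsets_containing_avoiding[OF assms(1,3,2) assms(4)[symmetric] assms(5)]
    by (simp add: n_subsets assms(1))
qed

lemma sum_weight_products_by_label:
  fixes a :: "'i \<Rightarrow> real" and c :: "'i \<Rightarrow> 'b"
  assumes "finite I"
  shows "(\<Sum>i\<in>I. \<Sum>j\<in>I. a i * a j * (if c i = c j then 1 else r))
       = (\<Sum>i\<in>I. a i)\<^sup>2 - (1 - r) * (\<Sum>i\<in>I. \<Sum>j | j \<in> I \<and> c j \<noteq> c i. a i * a j)"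
proof -
  have "(\<Sum>j\<in>I. a i * a j * (if c i = c j then 1 else r))
      = (\<Sum>j\<in>I. a i * a j) - (1 - r) * (\<Sum>j | j \<in> I \<and> c j \<noteq> c i. a i * a j)" for i
  proof -
    have "(\<Sum>j | j \<in> I \<and> c j \<noteq> c i. a i * a j) = (\<Sum>j\<in>I. if c j \<noteq> c i then a i * a j else 0)"
      using sum.inter_filter[OF assms, of "\<lambda>j. a i * a j" "\<lambda>j. c j \<noteq> c i"] by simp
    moreover have "(\<Sum>j\<in>I. a i * a j * (if c i = c j then 1 else r))
        = (\<Sum>j\<in>I. a i * a j - (1 - r) * (if c j \<noteq> c i then a i * a j else 0))"
      by (rule sum.cong) (auto simp: algebra_simps)
    ultimately show ?thesis by (simp add: sum_subtractf sum_distrib_left)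
  qed
  moreover have "(\<Sum>i\<in>I. a i)\<^sup>2 = (\<Sum>i\<in>I. \<Sum>j\<in>I. a i * a j)"
    by (simp add: power2_eq_square sum_product)
  ultimately show ?thesis by (simp add: sum_subtractf sum_distrib_left)
qed

lemma variance_pmf_of_set:
  fixes g :: "'a \<Rightarrow> real"
  assumes "finite S" "S \<noteq> {}"
  shows "measure_pmf.variance (pmf_of_set S) g
       = (\<Sum>x\<in>S. (g x)\<^sup>2) / card S - ((\<Sum>x\<in>S. g x) / card S)\<^sup>2"
  using assms
  by (subst measure_pmf.variance_eq) (simp_all add: integrable_measure_pmf_finite integral_pmf_of_set)

lemma variance_dose:
  assumes P: "partition_on {..<N} C" and finC: "finite C"
    and KT: "0 < KT" "KT \<le> card C" and pos: "0 < colsum N w s"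
  shows "measure_pmf.variance (cluster_design C KT) (\<lambda>Z. dose N w Z s)
       = 1 - (sign_mean (card C) KT)\<^sup>2 - (1 - sign_corr (card C) KT) *
         (\<Sum>i<N. \<Sum>j\<in>{..<N} - cluster_of C i. (w i s / colsum N w s) * (w j s / colsum N w s))"
proof -
  define S where "S = {T. T \<subseteq> C \<and> card T = KT}"
  define a where "a i = w i s / colsum N w s" for i
  define Y where "Y i T = treatment_sign (cluster_of C i) T" for i T
  define g where "g T = (\<Sum>i<N. a i * Y i T)" for T
  have card_S: "card S = card C choose KT" using n_subsets[OF finC] unfolding S_def by simp
  hence "card S > 0" using KT by simp
  hence finS: "finite S" and S_ne: "S \<noteq> {}" using card_gt_0_iff by blast+
  have sum_a: "(\<Sum>i<N. a i) = 1"
    using pos unfolding a_def colsum_def by (simp add: sum_divide_distrib[symmetric])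
  have cluster_in: "cluster_of C i \<in> C" if "i < N" for i
    using cluster_of_mem[OF P] that by simp
  have mean_Y: "(\<Sum>T\<in>S. Y i T) / card S = sign_mean (card C) KT" if "i < N" for i
    using mean_treatment_sign[OF finC cluster_in[OF that] KT(1)] card_S
    unfolding Y_def S_def by simp
  have mean_YY: "(\<Sum>T\<in>S. Y i T * Y j T) / card S
      = (if cluster_of C i = cluster_of C j then 1 else sign_corr (card C) KT)"
    if "i < N" "j < N" for i j
  proof (cases "cluster_of C i = cluster_of C j")
    case True
    then have "(\<Sum>T\<in>S. Y i T * Y j T) = (\<Sum>T\<in>S. 1)"
      by (intro sum.cong) (simp_all add: Y_def treatment_sign_def)
    with True \<open>card S > 0\<close> show ?thesis by simp
  next
    case False
    with mean_treatment_sign_product[OF finC cluster_in[OF that(1)] cluster_in[OF that(2)] _ KT(1)]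
    show ?thesis using card_S unfolding Y_def S_def by simp
  qed
  have "dose N w (\<lambda>i. if cluster_of C i \<in> T then 1 else -1) s = g T" for T
    by (simp add: dose_def g_def a_def Y_def treatment_sign_def sum_divide_distrib)
  then have "measure_pmf.variance (cluster_design C KT) (\<lambda>Z. dose N w Z s)
      = measure_pmf.variance (pmf_of_set S) g"
    unfolding cluster_design_def S_def[symmetric] by simp
  also have "\<dots> = (\<Sum>T\<in>S. (g T)\<^sup>2) / card S - ((\<Sum>T\<in>S. g T) / card S)\<^sup>2"
    by (rule variance_pmf_of_set[OF finS S_ne])
  also have "(\<Sum>T\<in>S. g T) / card S = (\<Sum>i<N. a i * ((\<Sum>T\<in>S. Y i T) / card S))"
    unfolding g_def by (simp add: sum.swap[of _ S] sum_distrib_left sum_divide_distrib)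
  also have "\<dots> = sign_mean (card C) KT"
    using sum_a by (simp add: mean_Y sum_distrib_right[symmetric])
  also have "(\<Sum>T\<in>S. (g T)\<^sup>2) / card S
      = (\<Sum>i<N. \<Sum>j<N. a i * a j * ((\<Sum>T\<in>S. Y i T * Y j T) / card S))"
    unfolding g_def power2_eq_square sum_product
    by (simp add: sum.swap[of _ S] sum_distrib_left sum_divide_distrib algebra_simps)
  also have "\<dots> = (\<Sum>i<N. \<Sum>j<N. a i * a j *
                   (if cluster_of C i = cluster_of C j then 1 else sign_corr (card C) KT))"
    by (intro sum.cong refl) (simp add: mean_YY)
  also have "\<dots> = 1 - (1 - sign_corr (card C) KT) *
      (\<Sum>i<N. \<Sum>j | j \<in> {..<N} \<and> cluster_of C j \<noteq> cluster_of C i. a i * a j)"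
    using sum_weight_products_by_label[of "{..<N}" a "cluster_of C"] sum_a by simp
  also have "(\<Sum>i<N. \<Sum>j | j \<in> {..<N} \<and> cluster_of C j \<noteq> cluster_of C i. a i * a j)
      = (\<Sum>i<N. \<Sum>j\<in>{..<N} - cluster_of C i. a i * a j)"
    by (intro sum.cong refl arg_cong[where f="\<lambda>A. sum _ A"]) (auto simp: mem_cluster_of_iff[OF P])
  finally show ?thesis by (simp add: a_def)
qed

lemma trace_var_dose_eq:
  assumes "C \<in> balanced_partitions N K" and "0 < KT" "KT \<le> K"
    and "\<And>s. s < M \<Longrightarrow> 0 < (\<Sum>i<N. w i s)"
  shows "trace_var_dose N M w KT C
       = M * (1 - (sign_mean K KT)\<^sup>2) - (1 - sign_corr K KT) * cross_cluster_weight N M w C"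
proof -
  have P: "partition_on {..<N} C" and card_C: "card C = K" and "finite C"
    using assms(1-3) card_ge_0_finite[of C] unfolding balanced_partitions_def by auto
  have "trace_var_dose N M w KT C = (\<Sum>s<M. 1 - (sign_mean K KT)\<^sup>2 - (1 - sign_corr K KT) *
      (\<Sum>i<N. \<Sum>j\<in>{..<N} - cluster_of C i. (w i s / colsum N w s) * (w j s / colsum N w s)))"
    unfolding trace_var_dose_def card_C[symmetric]
    using variance_dose[OF P \<open>finite C\<close>] assms(2-4) card_C by (simp add: colsum_def)
  also have "\<dots> = M * (1 - (sign_mean K KT)\<^sup>2) - (1 - sign_corr K KT) * cross_cluster_weight N M w C"
    unfolding cross_cluster_weight_def
    by (simp add: sum_subtractf sum_distrib_left sum.swap[of _ "{..<M}"])
  finally show ?thesis .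
qed

theorem mainTheorem8:
  fixes N M K KT :: nat and w :: "nat \<Rightarrow> nat \<Rightarrow> real"
  assumes "2 \<le> K" and "K dvd N"
    and "0 < KT" and "KT < K"
    and "\<And>i s. i < N \<Longrightarrow> s < M \<Longrightarrow> 0 \<le> w i s"
    and "\<And>s. s < M \<Longrightarrow> 0 < (\<Sum>i<N. w i s)"
  shows "{C \<in> balanced_partitions N K. \<forall>C' \<in> balanced_partitions N K.
            trace_var_dose N M w KT C' \<le> trace_var_dose N M w KT C}
       = {C \<in> balanced_partitions N K. \<forall>C' \<in> balanced_partitions N K.
            cross_cluster_weight N M w C \<le> cross_cluster_weight N M w C'}"
proof -
  have "0 < 1 - sign_corr K KT" using sign_corr_less_one[OF assms(3,4)] by simp
  moreover have "trace_var_dose N M w KT C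
      = M * (1 - (sign_mean K KT)\<^sup>2) - (1 - sign_corr K KT) * cross_cluster_weight N M w C"
    if "C \<in> balanced_partitions N K" for C
    using trace_var_dose_eq[OF that assms(3)] assms(4,6) by simp
  ultimately have "trace_var_dose N M w KT C' \<le> trace_var_dose N M w KT C
      \<longleftrightarrow> cross_cluster_weight N M w C \<le> cross_cluster_weight N M w C'"
    if "C \<in> balanced_partitions N K" "C' \<in> balanced_partitions N K" for C C'
    using that by (simp add: mult_le_cancel_left_pos)
  then show ?thesis by blast
qed

end
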